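(* Assuming each arithmetic operation in $\mathbb{K}$ takes constant time, the $\mu$-Basis Algorithm (described in the context) on an input non-zero row vector $a\in\mathbb{K}[s]^n$ of degree $d$, $n>1$, has computational complexity $O(d^2n+d^3+n^2)$.
   Context: $\mu$-Basis Algorithm on $a=\sum_{j=0}^d c_js^j$ ($c_j\in\mathbb{K}^n$ row vectors): (1) determine $d$, the $c_j$, and form $A\in\mathbb{K}^{(2d+1)\times n(d+1)}$ whose $(i,\,kn+r)$ entry is the $r$-th entry of $c_{i-1-k}$ (zero if $i-1-k\notin\{0,\dots,d\}$). (2) Compute a partial reduced row-echelon form $E$ of $A$ by Gauss–Jordan elimination, processing columns left to right, carrying out row operations only on pivotal columns and basic non-pivotal columns, skipping non-pivotal columns whose index is congruent modulo $n$ to an already found non-pivotal index, and stopping forward elimination once $n-1$ basic non-pivotal columns are found; then perform backward elimination and normalization on those columns. (A column is pivotal if it is the first column and non-zero or independent of previous columns; basic non-pivotal indices are the minimal elements of the classes modulo $n$ of the non-pivotal indices.) (3) With $p$ the list of pivotal indices and $\tilde q=(\tilde q_1,\dots,\tilde q_{n-1})$ the basic non-pivotal indices, initialize an $n\times(n-1)$ zero matrix $M$; for each $j$ add $s^{\mathrm{quo}(\tilde q_j-1,n)}$ to $M_{\mathrm{rem}(\tilde q_j-1,n)+1,\,j}$; for each $i\le|p|$ and $j\le n-1$ subtract $E_{i,\tilde q_j}s^{\mathrm{quo}(p_i-1,n)}$ from $M_{\mathrm{rem}(p_i-1,n)+1,\,j}$; output $M$. *)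

theory Defs
  imports "HOL-Computational_Algebra.Polynomial"
begin

text \<open>Matrices are 0-indexed: row i (0..2d) and column col = k*n + r
  (k = col div n, r = col mod n) correspond to the paper's row i+1 and column col+1.
  Every elementary operation (field operation, read/write of an array entry, comparison,
  list append, loop step) is charged one unit in the counter.\<close>

datatype 'a rowop = Swap nat nat | AddMul nat nat 'a
  (* Swap i k: exchange rows i,k;  AddMul i k f: row i := row i + f * row k *)

record 'a mb_state =
  E :: "nat \<Rightarrow> nat \<Rightarrow> 'a"
  oplog :: "'a rowop list"
  piv :: "nat list"
  npb :: "nat list"
  seen :: "nat \<Rightarrow> bool"
  cost :: nat

definition tick :: "nat \<Rightarrow> ('a, 'b) mb_state_scheme \<Rightarrow> ('a, 'b) mb_state_scheme" where
  "tick k st = st\<lparr>cost := cost st + k\<rparr>"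

definition setE :: "nat \<Rightarrow> nat \<Rightarrow> 'a \<Rightarrow> ('a, 'b) mb_state_scheme \<Rightarrow> ('a, 'b) mb_state_scheme" where
  "setE i c v st = tick 1 (st\<lparr>E := (E st)(i := (E st i)(c := v))\<rparr>)"

fun apply_op_col :: "nat \<Rightarrow> 'a::field rowop \<Rightarrow> 'a mb_state \<Rightarrow> 'a mb_state" where
  "apply_op_col c (Swap i k) st = (let x = E st i c; y = E st k c in setE k c x (setE i c y st))"
| "apply_op_col c (AddMul i k f) st = setE i c (E st i c + f * E st k c) st"

definition elim_step :: "nat \<Rightarrow> nat \<Rightarrow> nat \<Rightarrow> 'a::field mb_state \<Rightarrow> 'a mb_state" where
  "elim_step c r i st = tick 1
     (if E st i c = 0 then st
      else let f = - E st i c / E st r c;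
               st' = apply_op_col c (AddMul i r f) st
           in st'\<lparr>oplog := oplog st' @ [AddMul i r f]\<rparr>)"

text \<open>Processing column c (n = vector length, R = 2d+1 rows).  Columns whose index is
  congruent mod n to an already found non-pivotal index are skipped; otherwise all row
  operations performed so far are carried out on this column, then a pivot is sought.\<close>
definition process_col :: "nat \<Rightarrow> nat \<Rightarrow> nat \<Rightarrow> 'a::field mb_state \<Rightarrow> 'a mb_state" where
  "process_col n R c st =
    (if seen st (c mod n) then tick 1 st
     else let st1 = tick 1 (fold (apply_op_col c) (oplog st) st);
              r = length (piv st1);
              st2 = tick (R - r) st1
          in case find (\<lambda>i. E st2 i c \<noteq> 0) [r..<R] of
               None \<Rightarrow> tick 1 (st2\<lparr>npb := npb st2 @ [c], seen := (seen st2)(c mod n := True)\<rparr>)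
             | Some i \<Rightarrow>
                 let st3 = apply_op_col c (Swap r i) st2;
                     st3' = st3\<lparr>oplog := oplog st3 @ [Swap r i]\<rparr>;
                     st4 = fold (elim_step c r) [Suc r..<R] st3'
                 in tick 1 (st4\<lparr>piv := piv st4 @ [c]\<rparr>))"

function fwd :: "nat \<Rightarrow> nat \<Rightarrow> nat \<Rightarrow> nat \<Rightarrow> 'a::field mb_state \<Rightarrow> 'a mb_state" where
  "fwd n R N c st =
     (if N \<le> c \<or> n - 1 \<le> length (npb st) then tick 1 st
      else fwd n R N (Suc c) (process_col n R c st))"
  by pat_completeness auto
termination by (relation "measure (\<lambda>(n, R, N, c, st). N - c)") auto

definition back_row :: "nat \<Rightarrow> 'a::field mb_state \<Rightarrow> 'a mb_state" where
  "back_row i st =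
    (let pc = piv st ! i; v = E st i pc;
         st1 = fold (\<lambda>q s. setE i q (E s i q / v) s) (npb st) st;
         st2 = setE i pc 1 st1
     in fold (\<lambda>i' s. let f = E s i' pc;
                         s1 = fold (\<lambda>q s'. setE i' q (E s' i' q - f * E s' i q) s') (npb s) s
                     in setE i' pc 0 s1) [0..<i] st2)"

definition backward :: "'a::field mb_state \<Rightarrow> 'a mb_state" where
  "backward st = fold back_row (rev [0..<length (piv st)]) st"

definition vdeg :: "'a::zero poly list \<Rightarrow> nat" where
  "vdeg a = Max (degree ` set a)"

definition A_entry :: "'a::zero poly list \<Rightarrow> nat \<Rightarrow> nat \<Rightarrow> nat \<Rightarrow> nat \<Rightarrow> 'a" where
  "A_entry a n d i col =
     (let k = col div n; r = col mod n in
      if k \<le> i \<and> i - k \<le> d then coeff (a ! r) (i - k) else 0)"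

definition build_A :: "'a::field poly list \<Rightarrow> nat \<Rightarrow> nat \<Rightarrow> 'a mb_state" where
  "build_A a n d =
     fold (\<lambda>i s. fold (\<lambda>col s'. setE i col (A_entry a n d i col) s') [0..<n * (d + 1)] s)
          [0..<2 * d + 1]
          \<lparr>E = (\<lambda>_ _. 0), oplog = [], piv = [], npb = [], seen = (\<lambda>_. False), cost = length a\<rparr>"
  (* initial cost length a: determining d by inspecting the degrees of the n entries *)

definition setM :: "nat \<Rightarrow> nat \<Rightarrow> 'a poly \<Rightarrow> (nat \<Rightarrow> nat \<Rightarrow> 'a poly) \<times> nat
                     \<Rightarrow> (nat \<Rightarrow> nat \<Rightarrow> 'a poly) \<times> nat" where
  "setM i j p Mk = ((fst Mk)(i := (fst Mk i)(j := p)), snd Mk + 1)"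

definition build_M :: "nat \<Rightarrow> 'a::field mb_state \<Rightarrow> (nat \<Rightarrow> nat \<Rightarrow> 'a poly) \<times> nat" where
  "build_M n st =
    (let p = piv st; q = npb st;
         M0 = fold (\<lambda>i s. fold (\<lambda>j s'. setM i j 0 s') [0..<n - 1] s) [0..<n] ((\<lambda>_ _. 0), 0);
         M1 = fold (\<lambda>j s. setM (q ! j mod n) j (fst s (q ! j mod n) j + monom 1 (q ! j div n)) s)
                [0..<n - 1] M0;
         M2 = fold (\<lambda>i s. fold (\<lambda>j s'.
                   setM (p ! i mod n) j
                     (fst s' (p ! i mod n) j - monom (E st i (q ! j)) (p ! i div n)) s')
                   [0..<n - 1] s) [0..<length p] M1
     in M2)"

definition mu_basis_run :: "'a::field poly list \<Rightarrow> (nat \<Rightarrow> nat \<Rightarrow> 'a poly) \<times> nat" where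
  "mu_basis_run a =
    (let n = length a; d = vdeg a;
         st0 = build_A a n d;
         st1 = fwd n (2 * d + 1) (n * (d + 1)) 0 st0;
         st2 = backward st1;
         Mk = build_M n st2
     in (fst Mk, cost st2 + snd Mk))"

definition mu_basis_cost :: "'a::field poly list \<Rightarrow> nat" where
  "mu_basis_cost a = snd (mu_basis_run a)"

end

theory Submission
  imports Defs
begin

text \<open>Forward elimination logs at most R = 2d+1 row operations per pivot, so carrying the
  logged operations out on a new column costs O(R^2).  A column that is not skipped produces
  either a pivot or a new basic non-pivotal index; there are at most R of the former and n-1 of
  the latter, and the pass stops after at most N = n(d+1) columns, so the forward pass costs
  O(N + R^2 (R + n)).  Backward elimination clears at most R entries above each of the at most R
  pivots, in at most n columns each, and forming A and M costs O(R N + n^2 + R n).  With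
  R = 2d+1 every term is O(d^2 n + d^3 + n^2).\<close>

lemma fold_measure_le:
  assumes "\<And>x s. m (f x s) \<le> m s + k"
  shows "m (fold f xs s) \<le> m s + k * length xs"
proof (induction xs arbitrary: s)
  case (Cons x xs)
  show ?case using Cons.IH[of "f x s"] assms[of x s] by simp
qed simp

lemma tick_simps [simp]:
  "cost (tick k st) = cost st + k" "piv (tick k st) = piv st"
  "npb (tick k st) = npb st" "oplog (tick k st) = oplog st"
  by (simp_all add: tick_def)

lemma setE_simps [simp]:
  "cost (setE i c v st) = cost st + 1" "piv (setE i c v st) = piv st"
  "npb (setE i c v st) = npb st" "oplog (setE i c v st) = oplog st"
  by (simp_all add: setE_def)

lemma apply_op_col_simps [simp]:
  "piv (apply_op_col c op st) = piv st" "npb (apply_op_col c op st) = npb st"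
  "oplog (apply_op_col c op st) = oplog st"
  by (cases op; simp add: Let_def)+

lemma cost_apply_op_col_le: "cost (apply_op_col c op st) \<le> cost st + 2"
  by (cases op) (simp_all add: Let_def)

lemma fold_apply_op_col_simps [simp]:
  "piv (fold (apply_op_col c) ops st) = piv st" "npb (fold (apply_op_col c) ops st) = npb st"
  "oplog (fold (apply_op_col c) ops st) = oplog st"
  by (induction ops arbitrary: st) simp_all

lemma elim_step_simps [simp]:
  "piv (elim_step c r i st) = piv st" "npb (elim_step c r i st) = npb st"
  by (simp_all add: elim_step_def Let_def)

lemma fold_elim_step_simps [simp]:
  "piv (fold (elim_step c r) rows st) = piv st" "npb (fold (elim_step c r) rows st) = npb st"
  by (induction rows arbitrary: st) simp_all

lemma length_oplog_elim_step_le: "length (oplog (elim_step c r i st)) \<le> length (oplog st) + 1"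
  by (simp add: elim_step_def Let_def)

lemma cost_elim_step_le: "cost (elim_step c r i st) \<le> cost st + 2"
  by (simp add: elim_step_def Let_def)

text \<open>Each pivot contributes one swap and at most R - 1 eliminations to the log.\<close>
definition log_bounded :: "nat \<Rightarrow> 'a mb_state \<Rightarrow> bool" where
  "log_bounded R st \<longleftrightarrow> length (piv st) \<le> R \<and> length (oplog st) \<le> length (piv st) * R"

lemma cost_replay_log_le:
  assumes "log_bounded R st"
  shows "cost (fold (apply_op_col c) (oplog st) st) \<le> cost st + 2 * R * R"
proof -
  have "length (oplog st) \<le> R * R"
    using assms unfolding log_bounded_def by (meson le_trans mult_le_mono1)
  then show ?thesis
    using fold_measure_le[of cost "apply_op_col c" 2 "oplog st" st] cost_apply_op_col_le by force
qed

lemma pivot_elimination: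
  fixes st :: "'a::field mb_state" and c i :: nat
  assumes "log_bounded R st" and r: "r = length (piv st)" and "r < R"
  defines "st' \<equiv> fold (elim_step c r) [Suc r..<R]
     ((apply_op_col c (Swap r i) st)\<lparr>oplog := oplog st @ [Swap r i]\<rparr>)"
  shows "piv st' = piv st" "npb st' = npb st" "log_bounded R (st'\<lparr>piv := piv st' @ [c]\<rparr>)"
    "cost st' \<le> cost st + 2 * R"
proof -
  let ?st = "(apply_op_col c (Swap r i) st)\<lparr>oplog := oplog st @ [Swap r i]\<rparr>"
  have "length (oplog st') \<le> length (oplog ?st) + 1 * length [Suc r..<R]"
    unfolding st'_def by (rule fold_measure_le) (rule length_oplog_elim_step_le)
  then have "length (oplog st') \<le> r * R + R"
    using assms(1,3) r by (simp add: log_bounded_def)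
  moreover show "piv st' = piv st"
    by (simp add: st'_def)
  ultimately show "log_bounded R (st'\<lparr>piv := piv st' @ [c]\<rparr>)"
    using assms(3) r by (simp add: log_bounded_def)
  have "cost st' \<le> cost ?st + 2 * length [Suc r..<R]"
    unfolding st'_def by (rule fold_measure_le) (rule cost_elim_step_le)
  then show "cost st' \<le> cost st + 2 * R"
    using cost_apply_op_col_le[of c "Swap r i" st] assms(3) by simp
  show "npb st' = npb st"
    by (simp add: st'_def)
qed

lemma process_col_seen: "seen st (c mod n) \<Longrightarrow> process_col n R c st = tick 1 st"
  by (simp add: process_col_def)

lemma process_col_unseen:
  fixes st :: "'a::field mb_state"
  assumes unseen: "\<not> seen st (c mod n)" and log: "log_bounded R st"
  defines "st' \<equiv> process_col n R c st"
  shows "log_bounded R st'"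
    and "length (piv st') + length (npb st') = length (piv st) + length (npb st) + 1"
    and "length (npb st') \<le> length (npb st) + 1"
    and "cost st' \<le> cost st + (2 * R * R + 3 * R + 2)"
proof -
  define r where "r = length (piv st)"
  define st2 where "st2 = tick (R - r) (tick 1 (fold (apply_op_col c) (oplog st) st))"
  have st2: "piv st2 = piv st" "npb st2 = npb st" "oplog st2 = oplog st"
    by (simp_all add: st2_def)
  have cost_st2: "cost st2 \<le> cost st + 2 * R * R + R + 1"
    using cost_replay_log_le[OF log, of c] by (simp add: st2_def)
  have log2: "log_bounded R st2"
    using log st2 by (simp add: log_bounded_def)
  have "log_bounded R st' \<and>
      length (piv st') + length (npb st') = length (piv st) + length (npb st) + 1 \<and>
      length (npb st') \<le> length (npb st) + 1 \<and> cost st' \<le> cost st + (2 * R * R + 3 * R + 2)"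
  proof (cases "find (\<lambda>i. E st2 i c \<noteq> 0) [r..<R]")
    case None
    then have "st' = tick 1 (st2\<lparr>npb := npb st2 @ [c], seen := (seen st2)(c mod n := True)\<rparr>)"
      using unseen by (simp add: st'_def process_col_def st2_def r_def Let_def)
    then show ?thesis
      using st2 cost_st2 log2 by (simp add: log_bounded_def)
  next
    case (Some i)
    have "r < R"
      using Some by (auto simp: find_Some_iff)
    define st4 where "st4 = fold (elim_step c r) [Suc r..<R]
      ((apply_op_col c (Swap r i) st2)\<lparr>oplog := oplog st2 @ [Swap r i]\<rparr>)"
    have "st' = tick 1 (st4\<lparr>piv := piv st4 @ [c]\<rparr>)"
      using unseen Some by (simp add: st'_def process_col_def st2_def st4_def r_def Let_def)
    moreover have "r = length (piv st2)"
      using st2 r_def by simp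
    note elim = pivot_elimination[OF log2 this \<open>r < R\<close>, of c i, folded st4_def]
    ultimately show ?thesis
      using st2 cost_st2 elim by (simp add: log_bounded_def)
  qed
  then show "log_bounded R st'"
    and "length (piv st') + length (npb st') = length (piv st) + length (npb st) + 1"
    and "length (npb st') \<le> length (npb st) + 1"
    and "cost st' \<le> cost st + (2 * R * R + 3 * R + 2)"
    by auto
qed

declare fwd.simps [simp del]

text \<open>Every column that is not skipped adds a pivot or a basic non-pivotal index, so its cost
  is paid for by the growth of the potential (2 R^2 + 3 R + 2) * (#pivots + #non-pivotal).\<close>
lemma fwd_cost_potential:
  fixes st :: "'a::field mb_state"
  assumes "log_bounded R st" "length (npb st) \<le> n - 1"
  shows "log_bounded R (fwd n R N c st) \<and> length (npb (fwd n R N c st)) \<le> n - 1 \<and>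
    cost (fwd n R N c st) + (2 * R * R + 3 * R + 2) * (length (piv st) + length (npb st))
      \<le> cost st + (N - c) + 1 +
         (2 * R * R + 3 * R + 2) * (length (piv (fwd n R N c st)) + length (npb (fwd n R N c st)))"
  using assms
proof (induction n R N c st rule: fwd.induct)
  case (1 n R N c st)
  define K where "K = 2 * R * R + 3 * R + 2"
  show ?case
  proof (cases "N \<le> c \<or> n - 1 \<le> length (npb st)")
    case True
    then have "fwd n R N c st = tick 1 st"
      by (subst fwd.simps) simp
    then show ?thesis
      using "1.prems" by (simp add: log_bounded_def)
  next
    case False
    define st' where "st' = process_col n R c st"
    have fwd_eq: "fwd n R N c st = fwd n R N (Suc c) st'"
      using False by (subst fwd.simps) (simp add: st'_def)
    have step: "log_bounded R st' \<and> length (npb st') \<le> n - 1 \<and>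
        cost st' + K * (length (piv st) + length (npb st))
          \<le> cost st + 1 + K * (length (piv st') + length (npb st'))"
    proof (cases "seen st (c mod n)")
      case True
      then show ?thesis
        using "1.prems" False by (simp add: st'_def process_col_seen log_bounded_def)
    next
      case unseen: False
      show ?thesis
        using process_col_unseen[OF unseen "1.prems"(1)] False
        unfolding st'_def K_def by (simp add: algebra_simps)
    qed
    then have IH: "log_bounded R (fwd n R N (Suc c) st') \<and> length (npb (fwd n R N (Suc c) st')) \<le> n - 1 \<and>
        cost (fwd n R N (Suc c) st') + K * (length (piv st') + length (npb st'))
          \<le> cost st' + (N - Suc c) + 1 +
             K * (length (piv (fwd n R N (Suc c) st')) + length (npb (fwd n R N (Suc c) st')))"
      using "1.IH"[OF False, folded st'_def] unfolding K_def by blast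
    have "N - Suc c + 1 = N - c"
      using False by linarith
    then show ?thesis
      unfolding fwd_eq K_def[symmetric] using IH step by linarith
  qed
qed

lemma fwd_cost_le:
  fixes st :: "'a::field mb_state"
  assumes "piv st = []" "npb st = []" "oplog st = []"
  shows "cost (fwd n R N 0 st) \<le> cost st + N + 1 + (2 * R * R + 3 * R + 2) * (R + n)"
    and "length (piv (fwd n R N 0 st)) \<le> R" "length (npb (fwd n R N 0 st)) \<le> n - 1"
proof -
  have fwd: "log_bounded R (fwd n R N 0 st) \<and> length (npb (fwd n R N 0 st)) \<le> n - 1 \<and>
      cost (fwd n R N 0 st) \<le> cost st + N + 1 +
        (2 * R * R + 3 * R + 2) * (length (piv (fwd n R N 0 st)) + length (npb (fwd n R N 0 st)))"
    using fwd_cost_potential[of R st n N 0] assms by (simp add: log_bounded_def)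
  then show "length (piv (fwd n R N 0 st)) \<le> R" "length (npb (fwd n R N 0 st)) \<le> n - 1"
    by (simp_all add: log_bounded_def)
  then have "(2 * R * R + 3 * R + 2) * (length (piv (fwd n R N 0 st)) + length (npb (fwd n R N 0 st)))
      \<le> (2 * R * R + 3 * R + 2) * (R + n)"
    by (intro mult_le_mono2) linarith
  then show "cost (fwd n R N 0 st) \<le> cost st + N + 1 + (2 * R * R + 3 * R + 2) * (R + n)"
    using fwd by linarith
qed

lemma fold_setE_simps [simp]:
  "piv (fold (\<lambda>q s. setE i q (g q s) s) qs st) = piv st"
  "npb (fold (\<lambda>q s. setE i q (g q s) s) qs st) = npb st"
  "oplog (fold (\<lambda>q s. setE i q (g q s) s) qs st) = oplog st"
  "cost (fold (\<lambda>q s. setE i q (g q s) s) qs st) = cost st + length qs"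
  by (induction qs arbitrary: st) simp_all

lemma fold_clear_column_simps [simp]:
  "piv (fold (\<lambda>j s. setE j pc 0 (fold (\<lambda>q s'. setE j q (h j q s s') s') (npb s) s)) rows st) = piv st"
  "npb (fold (\<lambda>j s. setE j pc 0 (fold (\<lambda>q s'. setE j q (h j q s s') s') (npb s) s)) rows st) = npb st"
  "cost (fold (\<lambda>j s. setE j pc 0 (fold (\<lambda>q s'. setE j q (h j q s s') s') (npb s) s)) rows st)
     = cost st + length rows * Suc (length (npb st))"
  by (induction rows arbitrary: st) simp_all

lemma back_row_simps [simp]:
  "piv (back_row i st) = piv st" "npb (back_row i st) = npb st"
  "cost (back_row i st) = cost st + Suc i * Suc (length (npb st))"
  by (simp_all add: back_row_def Let_def)

lemma cost_fold_back_row: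
  "cost (fold back_row rows st) = cost st + (\<Sum>i\<leftarrow>rows. Suc i) * Suc (length (npb st))"
  by (induction rows arbitrary: st) (simp_all add: algebra_simps)

lemma backward_simps [simp]: "piv (backward st) = piv st" "npb (backward st) = npb st"
proof -
  have "piv (fold back_row rows st) = piv st \<and> npb (fold back_row rows st) = npb st" for rows
    by (induction rows arbitrary: st) simp_all
  then show "piv (backward st) = piv st" "npb (backward st) = npb st"
    by (simp_all add: backward_def)
qed

lemma cost_backward_le:
  "cost (backward st) \<le> cost st + length (piv st) * length (piv st) * Suc (length (npb st))"
proof -
  let ?p = "length (piv st)"
  have "(\<Sum>i\<leftarrow>rev [0..<?p]. Suc i) = (\<Sum>i<?p. Suc i)"
    by (simp add: rev_map[symmetric] sum_list.rev sum_list_distinct_conv_sum_set atLeast0LessThan)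
  also have "\<dots> \<le> ?p * ?p"
    using sum_bounded_above[of "{..<?p}" Suc ?p] by simp
  finally have "(\<Sum>i\<leftarrow>rev [0..<?p]. Suc i) * Suc (length (npb st)) \<le> ?p * ?p * Suc (length (npb st))"
    by (rule mult_le_mono1)
  then show ?thesis
    unfolding backward_def cost_fold_back_row by simp
qed

lemma fold_setE_grid_simps [simp]:
  "piv (fold (\<lambda>i s. fold (\<lambda>q s'. setE i q (g i q s') s') cols s) rows st) = piv st"
  "npb (fold (\<lambda>i s. fold (\<lambda>q s'. setE i q (g i q s') s') cols s) rows st) = npb st"
  "oplog (fold (\<lambda>i s. fold (\<lambda>q s'. setE i q (g i q s') s') cols s) rows st) = oplog st"
  "cost (fold (\<lambda>i s. fold (\<lambda>q s'. setE i q (g i q s') s') cols s) rows st)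
     = cost st + length rows * length cols"
  by (induction rows arbitrary: st) simp_all

lemma build_A_simps:
  "piv (build_A a n d) = []" "npb (build_A a n d) = []" "oplog (build_A a n d) = []"
  "cost (build_A a n d) = length a + (2 * d + 1) * (n * (d + 1))"
  by (simp_all add: build_A_def del: upt_Suc)

lemma snd_setM [simp]: "snd (setM i j p Mk) = snd Mk + 1"
  by (simp add: setM_def)

lemma snd_fold_setM [simp]: "snd (fold (\<lambda>j s. setM (I j s) j (P j s) s) cols Mk) = snd Mk + length cols"
  by (induction cols arbitrary: Mk) simp_all

lemma snd_fold_setM_grid [simp]:
  "snd (fold (\<lambda>i s. fold (\<lambda>j s'. setM (I i j s') j (P i j s s') s') cols s) rows Mk)
     = snd Mk + length rows * length cols"
  by (induction rows arbitrary: Mk) simp_all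

lemma snd_build_M: "snd (build_M n st) = n * (n - 1) + (n - 1) + length (piv st) * (n - 1)"
  by (simp add: build_M_def Let_def)

lemma mu_basis_cost_le:
  fixes a :: "'a::field poly list"
  assumes "length a \<ge> 1"
  defines "n \<equiv> length a" and "d \<equiv> vdeg a" and "R \<equiv> 2 * vdeg a + 1"
  shows "mu_basis_cost a \<le> n + R * (n * (d + 1)) + n * (d + 1) + 1 + (2 * R * R + 3 * R + 2) * (R + n)
    + R * R * n + (n * n + n + R * n)"
proof -
  define st1 where "st1 = fwd n R (n * (d + 1)) 0 (build_A a n d)"
  have cost_eq: "mu_basis_cost a = cost (backward st1) + snd (build_M n (backward st1))"
    by (simp add: mu_basis_cost_def mu_basis_run_def Let_def st1_def n_def d_def R_def)
  note fwd = fwd_cost_le[of "build_A a n d" n R "n * (d + 1)", OF build_A_simps(1-3), folded st1_def]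
  have "length (piv st1) * length (piv st1) * Suc (length (npb st1)) \<le> R * R * n"
    using fwd(2,3) assms(1) n_def by (intro mult_le_mono) auto
  then have "cost (backward st1) \<le> cost st1 + R * R * n"
    using cost_backward_le[of st1] by linarith
  moreover have "snd (build_M n (backward st1)) \<le> n * n + n + R * n"
  proof -
    have "n * (n - 1) \<le> n * n" "length (piv st1) * (n - 1) \<le> R * n"
      using fwd(2) by (simp_all add: mult_le_mono)
    then show ?thesis
      using snd_build_M[of n "backward st1"] unfolding backward_simps by linarith
  qed
  ultimately show ?thesis
    using cost_eq fwd(1) build_A_simps(4)[of a n d] unfolding n_def R_def d_def by linarith
qed

lemma cost_polynomial_le:
  fixes n d :: nat
  assumes "n \<ge> 1"
  defines "R \<equiv> 2 * d + 1" and "T \<equiv> d ^ 2 * n + d ^ 3 + n ^ 2"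
  shows "n + R * (n * (d + 1)) + n * (d + 1) + 1 + (2 * R * R + 3 * R + 2) * (R + n)
    + R * R * n + (n * n + n + R * n) \<le> 140 * T"
proof -
  have expand: "n + R * (n * (d + 1)) + n * (d + 1) + 1 + (2 * R * R + 3 * R + 2) * (R + n)
      + R * R * n + (n * n + n + R * n)
    = 16 * (d * d * d) + 14 * (d * d * n) + n * n + 36 * (d * d) + 24 * (d * n) + 28 * d + 13 * n + 8"
    unfolding R_def by (simp add: algebra_simps)
  have cube: "d * d * d \<le> T" and quad: "d * d * n \<le> T" and sq: "n * n \<le> T"
    unfolding T_def by (simp_all add: power2_eq_square power3_eq_cube)
  have "n \<le> n * n" "1 \<le> n"
    using assms(1) by simp_all
  moreover have "d * d \<le> d * d * n" "d \<le> d * n"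
    using assms(1) by simp_all
  moreover have "d * n \<le> d * d * n"
    by (cases d) simp_all
  ultimately show ?thesis
    unfolding expand using cube quad sq by linarith
qed

theorem theorem3:
  "\<exists>C::real. \<forall>a :: 'a::field poly list.
      length a > 1 \<longrightarrow> (\<exists>x\<in>set a. x \<noteq> 0) \<longrightarrow>
      real (mu_basis_cost a)
        \<le> C * real (vdeg a ^ 2 * length a + vdeg a ^ 3 + length a ^ 2)"
proof (intro exI allI impI)
  fix a :: "'a::field poly list"
  \<comment> \<open>The bound holds for every input with n \<ge> 1; a non-zero entry is not needed.\<close>
  assume "length a > 1"
  then have "mu_basis_cost a \<le> 140 * (vdeg a ^ 2 * length a + vdeg a ^ 3 + length a ^ 2)"
    using mu_basis_cost_le[of a] cost_polynomial_le[of "length a" "vdeg a"] by simp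
  then show "real (mu_basis_cost a) \<le> 140 * real (vdeg a ^ 2 * length a + vdeg a ^ 3 + length a ^ 2)"
    by (metis of_nat_le_iff of_nat_mult of_nat_numeral)
qed

end
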